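(* Let $a=(a_1,\dots,a_d)\in\mathcal{UN}_d$ and let $A_a$ be a real symmetric matrix associated to $a$. Then for each $j=1,\dots,d$, all $j\times j$ principal minors of $A_a$ are equal.
   Context: A polynomial in $\mathbb{R}[z]$ is hyperbolic if all its roots are real. A sequence $a\in\mathbb{R}^d$ is a Nuij sequence if for every hyperbolic $p\in\mathbb{R}[z]$ of degree $d$, $p_a(z,s):=p(z)+\sum_{k=1}^d a_k s^k p^{(k)}(z)$ is hyperbolic for all $s\in\mathbb{R}$. A Nuij sequence $a$ admits a universal determinantal representation if there exists a real symmetric $d\times d$ matrix $A_a$ such that for every monic hyperbolic polynomial $p(z)=(z+\lambda_1)\cdots(z+\lambda_d)$ of degree $d$ one has $p_a(z,s)=\det(zI+D+sA_a)$, where $D$ is the diagonal matrix with diagonal entries $\lambda_1,\dots,\lambda_d$ in an arbitrary order; such $A_a$ is called a matrix associated to $a$. $\mathcal{UN}_d$ is the set of Nuij sequences in $\mathbb{R}^d$ admitting a universal determinantal representation. A $j\times j$ principal minor of a $d\times d$ matrix is the determinant of the submatrix obtained by deleting the same set of $d-j$ row and column indices. *)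

theory Defs
  imports "Jordan_Normal_Form.DL_Submatrix" "Jordan_Normal_Form.Determinant"
    "HOL-Computational_Algebra.Polynomial"
begin

definition hyperbolic :: "real poly \<Rightarrow> bool" where
  "hyperbolic p \<longleftrightarrow> (\<forall>z::complex. poly (map_poly complex_of_real p) z = 0 \<longrightarrow> z \<in> \<real>)"

text \<open>p_a(z,s) = p(z) + sum_{k=1}^d a_k s^k p^(k)(z), as a polynomial in z for fixed s.
  The sequence a = (a_1,...,a_d) is represented by a function on nat; only a 1..a d matter.\<close>
definition nuij_poly :: "nat \<Rightarrow> (nat \<Rightarrow> real) \<Rightarrow> real poly \<Rightarrow> real \<Rightarrow> real poly" where
  "nuij_poly d a p s = p + (\<Sum>k\<in>{1..d}. smult (a k * s ^ k) ((pderiv ^^ k) p))"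

definition nuij_seq :: "nat \<Rightarrow> (nat \<Rightarrow> real) \<Rightarrow> bool" where
  "nuij_seq d a \<longleftrightarrow>
     (\<forall>p. hyperbolic p \<and> degree p = d \<longrightarrow> (\<forall>s. hyperbolic (nuij_poly d a p s)))"

text \<open>A is a matrix associated to a: real symmetric d x d, and for every monic hyperbolic
  p(z) = (z+l_0)...(z+l_{d-1}) and every ordering of the l_i (i.e. every tuple l),
  p_a(z,s) = det(zI + diag(l) + sA) for all z, s.\<close>
definition associated_matrix :: "nat \<Rightarrow> (nat \<Rightarrow> real) \<Rightarrow> real mat \<Rightarrow> bool" where
  "associated_matrix d a A \<longleftrightarrow> A \<in> carrier_mat d d \<and> A\<^sup>T = A \<and>
     (\<forall>l :: nat \<Rightarrow> real. \<forall>z s.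
        poly (nuij_poly d a (\<Prod>i<d. [:l i, 1:]) s) z
          = det (z \<cdot>\<^sub>m 1\<^sub>m d + mat_diag d l + s \<cdot>\<^sub>m A))"

definition UN_set :: "nat \<Rightarrow> (nat \<Rightarrow> real) set" where
  "UN_set d = {a. nuij_seq d a \<and> (\<exists>A. associated_matrix d a A)}"

definition principal_minor :: "real mat \<Rightarrow> nat set \<Rightarrow> real" where
  "principal_minor A I = det (submatrix A I I)"

end

theory Submission imports Defs begin

text \<open>Let \<open>D\<^sub>I\<close> be diagonal with entries \<open>0\<close> on an index set \<open>I\<close> of size \<open>j\<close> and \<open>1\<close> off it. The
  polynomial \<open>\<Prod>\<^sub>i (z + (D\<^sub>I)\<^sub>i\<^sub>i) = z\<^sup>j (z + 1)\<^bsup>d - j\<^esup>\<close> depends only on \<open>j\<close>, so the universal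
  determinantal representation at \<open>z = 0\<close> shows that \<open>det (D\<^sub>I + s A)\<close> depends only on \<open>j\<close>. The rows
  in \<open>I\<close> of \<open>D\<^sub>I + s A\<close> are those of \<open>s A\<close>; dividing them by \<open>s\<close> and letting \<open>s \<rightarrow> 0\<close> leaves a
  matrix whose other rows are unit rows, and its determinant is the principal minor of \<open>A\<close> on \<open>I\<close>.\<close>

definition block_perm :: "nat \<Rightarrow> nat set \<Rightarrow> nat \<Rightarrow> nat" where
  "block_perm n I k =
     (if k < card I then pick I k else if k < n then pick (-I) (k - card I) else k)"

lemma card_lessThan_inter: "I \<subseteq> {..<n} \<Longrightarrow> card {i. i < n \<and> i \<in> I} = card I"
  by (metis (no_types, lifting) Collect_cong Collect_mem_eq lessThan_iff subset_iff)

lemma card_lessThan_diff: "I \<subseteq> {..<n} \<Longrightarrow> card {i. i < n \<and> i \<in> -I} = n - card I"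
proof -
  assume I: "I \<subseteq> {..<n}"
  have "{i. i < n \<and> i \<in> -I} = {..<n} - I" by auto
  then show ?thesis using I by (simp add: card_Diff_subset finite_subset)
qed

lemma infinite_compl_subset_lessThan: "I \<subseteq> {..<n} \<Longrightarrow> infinite (- I :: nat set)"
  by (metis Compl_partition finite_Un finite_lessThan finite_subset infinite_UNIV_nat)

lemma
  assumes I: "I \<subseteq> {..<n}" and k: "k < n"
  shows block_perm_less: "block_perm n I k < n"
    and block_perm_in_iff: "block_perm n I k \<in> I \<longleftrightarrow> k < card I"
proof -
  have "infinite (-I)" using I by (rule infinite_compl_subset_lessThan)
  then show "block_perm n I k < n" and "block_perm n I k \<in> I \<longleftrightarrow> k < card I"
    using pick_le[of k n I] pick_le[of "k - card I" n "-I"] card_lessThan_inter[OF I]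
      card_lessThan_diff[OF I] pick_in_set[of k I] pick_in_set[of "k - card I" "-I"] k
    by (auto simp: block_perm_def)
qed

lemma inj_on_block_perm:
  assumes I: "I \<subseteq> {..<n}" shows "inj_on (block_perm n I) {..<n}"
proof (rule inj_onI)
  have inf: "infinite (-I)" using I by (rule infinite_compl_subset_lessThan)
  have neq: "block_perm n I x \<noteq> block_perm n I y" if "x < y" "y < n" for x y
  proof (cases "y < card I \<or> card I \<le> x")
    case True
    then show ?thesis
      using pick_mono[of y I x] pick_mono_inf[OF inf, of "x - card I" "y - card I"]
        diff_less_mono[of x y "card I"] that
      by (auto simp: block_perm_def)
  next
    case False
    then show ?thesis
      using block_perm_in_iff[OF I, of x] block_perm_in_iff[OF I, of y] that by auto
  qed
  fix x y assume "x \<in> {..<n}" "y \<in> {..<n}" "block_perm n I x = block_perm n I y"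
  then show "x = y" using neq[of x y] neq[of y x] by (metis lessThan_iff nat_neq_iff)
qed

lemma block_perm_permutes:
  assumes I: "I \<subseteq> {..<n}" shows "block_perm n I permutes {0..<n}"
proof (rule bij_imp_permutes)
  have "block_perm n I ` {..<n} \<subseteq> {..<n}" using block_perm_less[OF I] by auto
  then have "block_perm n I ` {..<n} = {..<n}"
    by (rule endo_inj_surj[OF finite_lessThan _ inj_on_block_perm[OF I]])
  then show "bij_betw (block_perm n I) {0..<n} {0..<n}"
    using inj_on_block_perm[OF I] by (simp add: bij_betw_def atLeast0LessThan)
  show "block_perm n I x = x" if "x \<notin> {0..<n}" for x
    using that card_mono[OF finite_lessThan I] by (auto simp: block_perm_def)
qed

lemma det_permute_rows_cols:
  fixes M :: "'a::comm_ring_1 mat"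
  assumes M: "M \<in> carrier_mat n n" and p: "p permutes {0..<n}"
  shows "det (mat n n (\<lambda>(i,k). M $$ (p i, p k))) = det M"
proof -
  have pn: "i < n \<Longrightarrow> p i < n" for i using p permutes_in_image by fastforce
  define R where "R = mat n n (\<lambda>(i,k). M $$ (p i, k))"
  have R: "R \<in> carrier_mat n n" unfolding R_def by simp
  have "transpose_mat (mat n n (\<lambda>(i,k). M $$ (p i, p k)))
      = mat n n (\<lambda>(i,k). transpose_mat R $$ (p i, k))"
    by (rule eq_matI) (auto simp: R_def pn)
  then have "det (mat n n (\<lambda>(i,k). M $$ (p i, p k))) = signof p * det (transpose_mat R)"
    using det_transpose[of "mat n n (\<lambda>(i,k). M $$ (p i, p k))" n]
      det_permute_rows[of "transpose_mat R" n p] R p by simp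
  also have "\<dots> = signof p * (signof p * det M)"
    using det_transpose[OF R] det_permute_rows[OF M p] by (simp add: R_def)
  also have "\<dots> = det M" by (simp add: sign_def)
  finally show ?thesis .
qed

lemma det_eq_det_submatrix_if_unit_rows:
  fixes M :: "'a::idom mat"
  assumes M: "M \<in> carrier_mat n n" and I: "I \<subseteq> {..<n}"
    and unit: "\<And>i k. i < n \<Longrightarrow> k < n \<Longrightarrow> i \<notin> I \<Longrightarrow> M $$ (i,k) = (if i = k then 1 else 0)"
  shows "det M = det (submatrix M I I)"
proof -
  let ?p = "block_perm n I" and ?j = "card I"
  have j: "?j \<le> n" using card_mono[OF finite_lessThan I] by simp
  have dims: "card {i. i < dim_row M \<and> i \<in> I} = ?j" "card {i. i < dim_col M \<and> i \<in> I} = ?j"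
    using card_lessThan_inter[OF I] M by auto
  have S: "submatrix M I I \<in> carrier_mat ?j ?j"
    by (rule carrier_matI) (simp_all only: dim_submatrix dims)
  define X where "X = mat ?j (n - ?j) (\<lambda>(i,k). M $$ (?p i, ?p (k + ?j)))"
  have "mat n n (\<lambda>(i,k). M $$ (?p i, ?p k))
      = four_block_mat (submatrix M I I) X (0\<^sub>m (n - ?j) ?j) (1\<^sub>m (n - ?j))"
  proof (rule eq_matI)
    fix i k
    assume "i < dim_row (four_block_mat (submatrix M I I) X (0\<^sub>m (n - ?j) ?j) (1\<^sub>m (n - ?j)))"
      "k < dim_col (four_block_mat (submatrix M I I) X (0\<^sub>m (n - ?j) ?j) (1\<^sub>m (n - ?j)))"
    then have i: "i < n" and k: "k < n" using S j by auto
    have idx: "four_block_mat (submatrix M I I) X (0\<^sub>m (n - ?j) ?j) (1\<^sub>m (n - ?j)) $$ (i, k)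
      = (if i < ?j then if k < ?j then submatrix M I I $$ (i,k) else X $$ (i, k - ?j)
         else if k < ?j then 0 else (if i = k then 1 else 0))"
      using i k S j by (subst index_mat_four_block(1)) auto
    show "mat n n (\<lambda>(i,k). M $$ (?p i, ?p k)) $$ (i, k)
      = four_block_mat (submatrix M I I) X (0\<^sub>m (n - ?j) ?j) (1\<^sub>m (n - ?j)) $$ (i, k)"
    proof (cases "i < ?j")
      case True
      then show ?thesis
        using i k submatrix_index[of i M I k I] dims unfolding idx
        by (simp add: X_def block_perm_def)
    next
      case False
      have "?p i = ?p k \<longleftrightarrow> i = k" using inj_on_block_perm[OF I] i k by (auto dest: inj_onD)
      then show ?thesis using False i k unit[of "?p i" "?p k"] block_perm_less[OF I]
          block_perm_in_iff[OF I, of i] unfolding idx by simp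
    qed
  qed (use S j in \<open>simp_all\<close>)
  then show ?thesis
    using det_permute_rows_cols[OF M block_perm_permutes[OF I]]
      det_four_block_mat_lower_left_zero[OF S, of X "n - ?j"] by (simp add: X_def)
qed

lemma det_mat_scale_rows:
  fixes M :: "'a::comm_ring_1 mat"
  assumes M: "M \<in> carrier_mat n n"
  shows "det (mat n n (\<lambda>(i,k). c i * M $$ (i,k))) = (\<Prod>i<n. c i) * det M"
proof -
  have "signof p * (\<Prod>i=0..<n. mat n n (\<lambda>(i,k). c i * M $$ (i,k)) $$ (i, p i))
      = (\<Prod>i<n. c i) * (signof p * (\<Prod>i=0..<n. M $$ (i, p i)))" if "p permutes {0..<n}" for p
  proof -
    have "i < n \<Longrightarrow> p i < n" for i using that permutes_in_image by fastforce
    then have "(\<Prod>i=0..<n. mat n n (\<lambda>(i,k). c i * M $$ (i,k)) $$ (i, p i))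
        = (\<Prod>i=0..<n. c i * M $$ (i, p i))" by (intro prod.cong) auto
    then show ?thesis by (simp add: prod.distrib atLeast0LessThan)
  qed
  then show ?thesis
    using M by (simp add: det_def'[of _ n] sum_distrib_left)
qed

definition pencil_keep_rows :: "'a::ring_1 mat \<Rightarrow> nat set \<Rightarrow> 'a \<Rightarrow> 'a mat" where
  "pencil_keep_rows A I s = mat (dim_row A) (dim_col A)
     (\<lambda>(i,k). if i \<in> I then A $$ (i,k) else (if i = k then 1 else 0) + s * A $$ (i,k))"

lemma det_indicator_pencil:
  fixes A :: "'a::comm_ring_1 mat"
  assumes A: "A \<in> carrier_mat n n" and I: "I \<subseteq> {..<n}"
  shows "det (mat_diag n (\<lambda>i. if i \<in> I then 0 else 1) + s \<cdot>\<^sub>m A)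
    = s ^ card I * det (pencil_keep_rows A I s)"
proof -
  have "mat_diag n (\<lambda>i. if i \<in> I then 0 else 1) + s \<cdot>\<^sub>m A
      = mat n n (\<lambda>(i,k). (if i \<in> I then s else 1) * pencil_keep_rows A I s $$ (i,k))"
    using A by (intro eq_matI) (auto simp: pencil_keep_rows_def mat_diag_def algebra_simps)
  moreover have "(\<Prod>i<n. if i \<in> I then s else 1) = s ^ card I"
    using I by (simp add: prod.If_cases Int_absorb1)
  moreover have "pencil_keep_rows A I s \<in> carrier_mat n n"
    using A by (simp add: pencil_keep_rows_def)
  ultimately show ?thesis by (simp add: det_mat_scale_rows)
qed

lemma det_pencil_keep_rows_0:
  fixes A :: "'a::idom mat"
  assumes A: "A \<in> carrier_mat n n" and I: "I \<subseteq> {..<n}"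
  shows "det (pencil_keep_rows A I 0) = det (submatrix A I I)"
proof -
  have P: "pencil_keep_rows A I 0 \<in> carrier_mat n n" using A by (simp add: pencil_keep_rows_def)
  have "submatrix (pencil_keep_rows A I 0) I I = submatrix A I I"
  proof (rule eq_matI)
    fix i k assume "i < dim_row (submatrix A I I)" "k < dim_col (submatrix A I I)"
    then have "i < card {i. i < n \<and> i \<in> I}" "k < card {i. i < n \<and> i \<in> I}"
      using A by (auto simp: dim_submatrix)
    then show "submatrix (pencil_keep_rows A I 0) I I $$ (i, k) = submatrix A I I $$ (i, k)"
      using A P pick_le pick_in_set[of i I] card_lessThan_inter[OF I]
      by (simp add: submatrix_index pencil_keep_rows_def)
  qed (use A P in \<open>simp_all add: dim_submatrix\<close>)
  then show ?thesis
    using det_eq_det_submatrix_if_unit_rows[OF P I] A by (simp add: pencil_keep_rows_def)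
qed

lemma continuous_on_det:
  fixes M :: "'a::topological_space \<Rightarrow> 'b::real_normed_field mat"
  assumes M: "\<And>s. M s \<in> carrier_mat n n"
    and entries: "\<And>i k. i < n \<Longrightarrow> k < n \<Longrightarrow> continuous_on S (\<lambda>s. M s $$ (i,k))"
  shows "continuous_on S (\<lambda>s. det (M s))"
proof -
  have "continuous_on S
      (\<lambda>s. \<Sum>p\<in>{p. p permutes {0..<n}}. signof p * (\<Prod>i=0..<n. M s $$ (i, p i)))"
    using entries permutes_in_image by (fastforce intro!: continuous_intros)
  then show ?thesis using det_def'[OF M] by simp
qed

lemma continuous_on_det_pencil_keep_rows:
  fixes A :: "real mat"
  shows "continuous_on S (\<lambda>s. det (pencil_keep_rows A I s))"
proof (cases "dim_row A = dim_col A")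
  case True
  show ?thesis
  proof (rule continuous_on_det[where n = "dim_row A"])
    show "pencil_keep_rows A I s \<in> carrier_mat (dim_row A) (dim_row A)" for s
      using True by (simp add: pencil_keep_rows_def)
    fix i k assume "i < dim_row A" "k < dim_row A"
    then show "continuous_on S (\<lambda>s. pencil_keep_rows A I s $$ (i,k))"
      using True by (cases "i \<in> I") (simp_all add: pencil_keep_rows_def continuous_intros)
  qed
qed (simp add: det_def pencil_keep_rows_def)

lemma continuous_eq_if_eq_off_point:
  fixes f g :: "'a::perfect_space \<Rightarrow> 'b::t2_space"
  assumes "continuous_on UNIV f" "continuous_on UNIV g" "\<And>x. x \<noteq> a \<Longrightarrow> f x = g x"
  shows "f a = g a"
proof -
  have "(f \<longlongrightarrow> f a) (at a)" "(g \<longlongrightarrow> g a) (at a)"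
    using assms(1,2) by (simp_all add: continuous_on_def)
  moreover have "eventually (\<lambda>x. g x = f x) (at a)"
    using assms(3) by (auto simp: eventually_at_filter)
  ultimately have "(f \<longlongrightarrow> g a) (at a)" using Lim_transform_eventually by blast
  with \<open>(f \<longlongrightarrow> f a) (at a)\<close> show ?thesis using tendsto_unique[OF at_neq_bot] by blast
qed

lemma prod_linear_indicator:
  assumes I: "I \<subseteq> {..<n}"
  shows "(\<Prod>i<n. [:if i \<in> I then 0 else 1, 1:])
    = ([:0, 1:] ^ card I * [:1, 1:] ^ (n - card I) :: 'a::comm_ring_1 poly)"
proof -
  have "(\<Prod>i<n. [:if i \<in> I then 0 else 1, 1:])
      = (\<Prod>i<n. if i \<in> I then [:0, 1:] else ([:1, 1:] :: 'a poly))"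
    by (intro prod.cong) auto
  also have "\<dots> = [:0, 1:] ^ card I * [:1, 1:] ^ (n - card I)"
    using I
    by (simp add: prod.If_cases Int_absorb1 Diff_eq[symmetric] card_Diff_subset finite_subset)
  finally show ?thesis .
qed

theorem lemma3p3:
  fixes d j :: nat and a :: "nat \<Rightarrow> real" and A :: "real mat" and I J :: "nat set"
  assumes "a \<in> UN_set d"
    and "associated_matrix d a A"
    and "1 \<le> j" and "j \<le> d"
    and "I \<subseteq> {..<d}" and "card I = j"
    and "J \<subseteq> {..<d}" and "card J = j"
  shows "principal_minor A I = principal_minor A J"
proof -
  have A: "A \<in> carrier_mat d d"
    and repr: "\<And>l z s. poly (nuij_poly d a (\<Prod>i<d. [:l i, 1:]) s) z
      = det (z \<cdot>\<^sub>m 1\<^sub>m d + mat_diag d l + s \<cdot>\<^sub>m A)"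
    using assms(2) unfolding associated_matrix_def by auto
  have pencil: "s ^ j * det (pencil_keep_rows A K s)
      = poly (nuij_poly d a ([:0, 1:] ^ j * [:1, 1:] ^ (d - j)) s) 0"
    if K: "K \<subseteq> {..<d}" "card K = j" for K s
  proof -
    have "0 \<cdot>\<^sub>m 1\<^sub>m d + mat_diag d (\<lambda>i. if i \<in> K then 0 else 1) + s \<cdot>\<^sub>m A
        = mat_diag d (\<lambda>i. if i \<in> K then 0 else 1) + s \<cdot>\<^sub>m A"
      using A by (intro eq_matI) (auto simp: mat_diag_def)
    then show ?thesis
      using repr[where l = "\<lambda>i. if i \<in> K then 0 else 1" and z = 0 and s = s]
      by (simp add: prod_linear_indicator det_indicator_pencil A K)
  qed
  have off_0: "det (pencil_keep_rows A I s) = det (pencil_keep_rows A J s)" if "s \<noteq> 0" for s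
  proof -
    have "s ^ j * det (pencil_keep_rows A I s) = s ^ j * det (pencil_keep_rows A J s)"
      using pencil[OF assms(5,6), of s] pencil[OF assms(7,8), of s] by (rule trans[OF _ sym])
    then show ?thesis using that by simp
  qed
  have "det (pencil_keep_rows A I 0) = det (pencil_keep_rows A J 0)"
    by (rule continuous_eq_if_eq_off_point[OF continuous_on_det_pencil_keep_rows
          continuous_on_det_pencil_keep_rows off_0])
  then show ?thesis
    by (simp add: principal_minor_def det_pencil_keep_rows_0[OF A assms(5)]
        det_pencil_keep_rows_0[OF A assms(7)])
qed

end
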